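(* Let $T>0$ and $\beta>0$ be fixed. Then for every $R>0$, \[ \lim_{\mu\to 0}\ \sup_{|x|_{H^\beta}+\sqrt{\mu}\,|y|_{H}\leq R}\ \sup_{t\in[0,T]} \left|\Pi_1 S_\mu(t)(x,y)-S(t)x\right|_{H}=0, \] where the inner supremum is over $x\in H^\beta$, $y\in H$.
   Context: Let $D\subset\mathbb{R}^d$ be a bounded open domain with smooth boundary and $H=L^2(D)$ with norm $|\cdot|_H$ and inner product $\langle\cdot,\cdot\rangle_H$. Let $A$ be the realization in $H$ of the Laplacian with Dirichlet boundary conditions; let $\{e_k\}_{k\in\mathbb{N}}$ be a complete orthonormal system of $H$ and $0<\alpha_1\le\alpha_2\le\cdots\to\infty$ with $Ae_k=-\alpha_k e_k$. For $\beta\in\mathbb{R}$, $H^\beta$ is the completion of $C_0(D)$ with respect to $|x|_{H^\beta}^2=\sum_k \alpha_k^\beta|\langle x,e_k\rangle_H|^2$, and $\mathcal{H}_\beta:=H^\beta\times H^{\beta-1}$, with $\Pi_1(x,y)=x$, $\Pi_2(x,y)=y$. $S(t)$, $t\ge0$, denotes the semigroup generated by $A$. For $\mu>0$ let $A_\mu(x,y)=\frac1\mu(\mu y, Ax-y)$; it generates a strongly continuous group $S_\mu(t)$ on every $\mathcal{H}_\beta$ (these are compatible with each other); note $(x,y)\in H^\beta\times H\subset \mathcal{H}_0$ for $\beta>0$. *)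

theory Defs
  imports "HOL-Analysis.Analysis"
begin

text \<open>H = L^2(D) is represented by coefficient sequences with respect to
  the orthonormal eigenbasis e_k of the Dirichlet Laplacian (indexed from 0), and
  alpha k are the corresponding eigenvalues: A e_k = - alpha k e_k.\<close>

definition dirichlet_spectrum :: "(nat \<Rightarrow> real) \<Rightarrow> bool" where
  "dirichlet_spectrum \<alpha> \<longleftrightarrow> 0 < \<alpha> 0 \<and> mono \<alpha> \<and> filterlim \<alpha> at_top sequentially"

definition Hnorm :: "(nat \<Rightarrow> real) \<Rightarrow> real \<Rightarrow> (nat \<Rightarrow> real) \<Rightarrow> real" where
  "Hnorm \<alpha> \<beta> x = sqrt (\<Sum>k. \<alpha> k powr \<beta> * (x k)\<^sup>2)"

definition inH :: "(nat \<Rightarrow> real) \<Rightarrow> real \<Rightarrow> (nat \<Rightarrow> real) \<Rightarrow> bool" where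
  "inH \<alpha> \<beta> x \<longleftrightarrow> summable (\<lambda>k. \<alpha> k powr \<beta> * (x k)\<^sup>2)"

definition L2norm :: "(nat \<Rightarrow> real) \<Rightarrow> real" where
  "L2norm x = sqrt (\<Sum>k. (x k)\<^sup>2)"

definition heat_sg :: "(nat \<Rightarrow> real) \<Rightarrow> real \<Rightarrow> (nat \<Rightarrow> real) \<Rightarrow> (nat \<Rightarrow> real)" where
  "heat_sg \<alpha> t x = (\<lambda>k. exp (- \<alpha> k * t) * x k)"

text \<open>Restriction of A_mu(x,y) = (1/mu)(mu y, A x - y) to the k-th eigenmode
  (coefficient pair (x_k, y_k)).\<close>
definition mode_gen :: "(nat \<Rightarrow> real) \<Rightarrow> real \<Rightarrow> nat \<Rightarrow> real \<times> real \<Rightarrow> real \<times> real" where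
  "mode_gen \<alpha> \<mu> k z = (snd z, (- \<alpha> k * fst z - snd z) / \<mu>)"

definition mode_exp :: "(nat \<Rightarrow> real) \<Rightarrow> real \<Rightarrow> nat \<Rightarrow> real \<Rightarrow> real \<times> real \<Rightarrow> real \<times> real" where
  "mode_exp \<alpha> \<mu> k t z = (\<Sum>n. (t ^ n / fact n) *\<^sub>R ((mode_gen \<alpha> \<mu> k ^^ n) z))"

definition damped_group :: "(nat \<Rightarrow> real) \<Rightarrow> real \<Rightarrow> real \<Rightarrow> (nat \<Rightarrow> real) \<times> (nat \<Rightarrow> real)
    \<Rightarrow> (nat \<Rightarrow> real) \<times> (nat \<Rightarrow> real)" where
  "damped_group \<alpha> \<mu> t xy =
     ((\<lambda>k. fst (mode_exp \<alpha> \<mu> k t (fst xy k, snd xy k))),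
      (\<lambda>k. snd (mode_exp \<alpha> \<mu> k t (fst xy k, snd xy k))))"

end

theory Submission
  imports Defs "HOL-Real_Asymp.Real_Asymp"
begin

(* Each eigenmode of S_mu(t) is a damped oscillator u' = v, mu v' = - a u - v with a = alpha k.
   Its energy a u^2 + mu v^2 decreases, so |u| stays below B = sqrt (u(0)^2 + mu v(0)^2 / a), and
   two variation-of-constants estimates give |u(t) - exp (- a t) u(0)| <= 3 mu |v(0)| + 2 mu a B.
   Hence the modes with a <= N follow the heat flow up to O(mu (1 + N^2)), while the modes with
   a > N are small in H because the H^beta-norm of x gives them weight a^beta > N^beta.
   Choosing N large and then mu small proves the claim; all bounds hold for every t >= 0. *)

lemma summable_fact_series_geometric:
  fixes c :: "nat \<Rightarrow> real"
  assumes "\<And>n. \<bar>c n\<bar> \<le> C * L ^ n"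
  shows "summable (\<lambda>n. c n / fact n * t ^ n)"
proof (rule summable_comparison_test'[where N = 0])
  show "summable (\<lambda>n. C * (inverse (fact n) * (L * \<bar>t\<bar>) ^ n))"
    by (intro summable_mult summable_exp)
  fix n :: nat
  have "norm (c n / fact n * t ^ n) = \<bar>c n\<bar> * (inverse (fact n) * \<bar>t\<bar> ^ n)"
    by (simp add: abs_mult power_abs divide_inverse)
  also have "\<dots> \<le> C * L ^ n * (inverse (fact n) * \<bar>t\<bar> ^ n)"
    using assms by (intro mult_right_mono) auto
  finally show "norm (c n / fact n * t ^ n) \<le> C * (inverse (fact n) * (L * \<bar>t\<bar>) ^ n)"
    by (simp add: power_mult_distrib algebra_simps)
qed

lemma DERIV_fact_series_geometric:
  fixes c :: "nat \<Rightarrow> real"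
  assumes "\<And>n. \<bar>c n\<bar> \<le> C * L ^ n"
  shows "((\<lambda>t. \<Sum>n. c n / fact n * t ^ n) has_real_derivative (\<Sum>n. c (Suc n) / fact n * t ^ n)) (at t)"
proof -
  have "diffs (\<lambda>n. c n / fact n) = (\<lambda>n. c (Suc n) / fact n)"
    by (simp add: fun_eq_iff diffs_def fact_Suc field_simps del: of_nat_Suc)
  then show ?thesis
    using termdiffs_strong[OF summable_fact_series_geometric[OF assms, of "\<bar>t\<bar> + 1"], of t]
    by simp
qed

lemma mode_gen_norm_le:
  assumes "0 < \<mu>"
  shows "norm (mode_gen \<alpha> \<mu> k w) \<le> (1 + (\<bar>\<alpha> k\<bar> + 1) / \<mu>) * norm w"
proof -
  have fst_le: "\<bar>fst w\<bar> \<le> norm w" and snd_le: "\<bar>snd w\<bar> \<le> norm w"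
    using norm_fst_le[of "fst w" "snd w"] norm_snd_le[of "snd w" "fst w"] by auto
  have "\<bar>- \<alpha> k * fst w - snd w\<bar> \<le> \<bar>\<alpha> k\<bar> * norm w + norm w"
    using fst_le snd_le by (simp add: abs_mult abs_triangle_ineq4 order_trans[OF abs_triangle_ineq4]
        add_mono mult_left_mono)
  then have "\<bar>(- \<alpha> k * fst w - snd w) / \<mu>\<bar> \<le> (\<bar>\<alpha> k\<bar> + 1) / \<mu> * norm w"
    using assms by (simp add: divide_right_mono algebra_simps)
  moreover have "norm (mode_gen \<alpha> \<mu> k w) \<le> \<bar>snd w\<bar> + \<bar>(- \<alpha> k * fst w - snd w) / \<mu>\<bar>"
    unfolding mode_gen_def using norm_Pair_le by (metis real_norm_def)
  ultimately show ?thesis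
    using snd_le by (simp add: algebra_simps)
qed

lemma mode_gen_funpow_norm_le:
  assumes "0 < \<mu>"
  shows "norm ((mode_gen \<alpha> \<mu> k ^^ n) w) \<le> (1 + (\<bar>\<alpha> k\<bar> + 1) / \<mu>) ^ n * norm w"
proof (induction n)
  case 0
  then show ?case by simp
next
  case (Suc n)
  have "norm ((mode_gen \<alpha> \<mu> k ^^ Suc n) w)
      \<le> (1 + (\<bar>\<alpha> k\<bar> + 1) / \<mu>) * norm ((mode_gen \<alpha> \<mu> k ^^ n) w)"
    using mode_gen_norm_le[OF assms] by simp
  also have "\<dots> \<le> (1 + (\<bar>\<alpha> k\<bar> + 1) / \<mu>) * ((1 + (\<bar>\<alpha> k\<bar> + 1) / \<mu>) ^ n * norm w)"
    using Suc assms by (intro mult_left_mono) auto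
  finally show ?case by simp
qed

lemma mode_exp_eq_series:
  assumes "0 < \<mu>"
  shows "mode_exp \<alpha> \<mu> k t z =
    ((\<Sum>n. fst ((mode_gen \<alpha> \<mu> k ^^ n) z) / fact n * t ^ n),
     (\<Sum>n. snd ((mode_gen \<alpha> \<mu> k ^^ n) z) / fact n * t ^ n))"
proof -
  define L where "L = 1 + (\<bar>\<alpha> k\<bar> + 1) / \<mu>"
  let ?F = "\<lambda>n. (t ^ n / fact n) *\<^sub>R (mode_gen \<alpha> \<mu> k ^^ n) z"
  have "summable (\<lambda>n. norm (?F n))"
  proof (rule summable_comparison_test'[where N = 0])
    show "summable (\<lambda>n. norm z * (inverse (fact n) * (L * \<bar>t\<bar>) ^ n))"
      by (intro summable_mult summable_exp)
    fix n :: nat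
    have "norm (norm (?F n)) = inverse (fact n) * \<bar>t\<bar> ^ n * norm ((mode_gen \<alpha> \<mu> k ^^ n) z)"
      by (simp add: power_abs divide_inverse abs_mult)
    also have "\<dots> \<le> inverse (fact n) * \<bar>t\<bar> ^ n * (L ^ n * norm z)"
      unfolding L_def using mode_gen_funpow_norm_le[OF assms] by (intro mult_left_mono) auto
    finally show "norm (norm (?F n)) \<le> norm z * (inverse (fact n) * (L * \<bar>t\<bar>) ^ n)"
      by (simp add: algebra_simps)
  qed
  then have "summable ?F"
    by (rule summable_norm_cancel)
  from bounded_linear.suminf[OF bounded_linear_fst this] bounded_linear.suminf[OF bounded_linear_snd this]
  show ?thesis
    unfolding mode_exp_def
    by (simp add: prod_eq_iff mult.commute)
qed

lemma mode_exp_zero: "mode_exp \<alpha> \<mu> k 0 z = z"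
proof -
  have "(\<lambda>n. (0 ^ n / fact n) *\<^sub>R (mode_gen \<alpha> \<mu> k ^^ n) z) = (\<lambda>n. if n = 0 then z else 0)"
    by (simp add: fun_eq_iff power_0_left)
  then show ?thesis
    unfolding mode_exp_def using sums_single[of 0 "\<lambda>_. z", THEN sums_unique] by simp
qed

lemma mode_exp_has_derivative:
  assumes "0 < \<mu>"
  shows "((\<lambda>t. fst (mode_exp \<alpha> \<mu> k t z)) has_real_derivative snd (mode_exp \<alpha> \<mu> k t z)) (at t)"
    and "((\<lambda>t. snd (mode_exp \<alpha> \<mu> k t z)) has_real_derivative
           (- \<alpha> k * fst (mode_exp \<alpha> \<mu> k t z) - snd (mode_exp \<alpha> \<mu> k t z)) / \<mu>) (at t)"
proof -
  define L where "L = 1 + (\<bar>\<alpha> k\<bar> + 1) / \<mu>"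
  define a where "a n = fst ((mode_gen \<alpha> \<mu> k ^^ n) z)" for n
  define b where "b n = snd ((mode_gen \<alpha> \<mu> k ^^ n) z)" for n
  have a_le: "\<bar>a n\<bar> \<le> norm z * L ^ n" and b_le: "\<bar>b n\<bar> \<le> norm z * L ^ n" for n
    using mode_gen_funpow_norm_le[OF assms, where \<alpha> = \<alpha> and k = k and n = n and w = z]
      norm_fst_le[of "a n" "b n"] norm_snd_le[of "b n" "a n"]
    unfolding a_def b_def L_def by (simp_all add: mult.commute)
  have a_Suc: "a (Suc n) = b n" and b_Suc: "b (Suc n) = (- \<alpha> k * a n - b n) / \<mu>" for n
    unfolding a_def b_def by (simp_all add: mode_gen_def)
  have series: "mode_exp \<alpha> \<mu> k t z = ((\<Sum>n. a n / fact n * t ^ n), (\<Sum>n. b n / fact n * t ^ n))" for t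
    unfolding a_def b_def by (rule mode_exp_eq_series[OF assms])
  show "((\<lambda>t. fst (mode_exp \<alpha> \<mu> k t z)) has_real_derivative snd (mode_exp \<alpha> \<mu> k t z)) (at t)"
    using DERIV_fact_series_geometric[OF a_le] unfolding series by (simp add: a_Suc)
  have "(\<lambda>n. b (Suc n) / fact n * t ^ n) = (\<lambda>n. (- \<alpha> k * (a n / fact n * t ^ n) - b n / fact n * t ^ n) / \<mu>)"
    by (simp add: fun_eq_iff b_Suc field_simps)
  also have "\<dots> sums ((- \<alpha> k * (\<Sum>n. a n / fact n * t ^ n) - (\<Sum>n. b n / fact n * t ^ n)) / \<mu>)"
    by (intro sums_divide sums_diff sums_mult summable_sums
        summable_fact_series_geometric[OF a_le] summable_fact_series_geometric[OF b_le])
  finally have "(\<Sum>n. b (Suc n) / fact n * t ^ n)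
      = (- \<alpha> k * (\<Sum>n. a n / fact n * t ^ n) - (\<Sum>n. b n / fact n * t ^ n)) / \<mu>"
    by (rule sums_unique[symmetric])
  then show "((\<lambda>t. snd (mode_exp \<alpha> \<mu> k t z)) has_real_derivative
           (- \<alpha> k * fst (mode_exp \<alpha> \<mu> k t z) - snd (mode_exp \<alpha> \<mu> k t z)) / \<mu>) (at t)"
    using DERIV_fact_series_geometric[OF b_le, where t = t] unfolding series by simp
qed

lemma DERIV_dominated_abs_diff_le:
  fixes F G F' G' :: "real \<Rightarrow> real"
  assumes "0 \<le> s"
    and F: "\<And>t. 0 \<le> t \<Longrightarrow> t \<le> s \<Longrightarrow> (F has_real_derivative F' t) (at t)"
    and G: "\<And>t. 0 \<le> t \<Longrightarrow> t \<le> s \<Longrightarrow> (G has_real_derivative G' t) (at t)"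
    and dominated: "\<And>t. 0 \<le> t \<Longrightarrow> t \<le> s \<Longrightarrow> \<bar>F' t\<bar> \<le> G' t"
  shows "\<bar>F s - F 0\<bar> \<le> G s - G 0"
proof -
  have "(\<lambda>t. G t - F t) 0 \<le> (\<lambda>t. G t - F t) s"
  proof (rule DERIV_nonneg_imp_nondecreasing[OF \<open>0 \<le> s\<close>])
    fix t assume "0 \<le> t" "t \<le> s"
    then show "\<exists>y. ((\<lambda>t. G t - F t) has_real_derivative y) (at t) \<and> 0 \<le> y"
      using DERIV_diff[OF G F] dominated[of t] by (intro exI[of _ "G' t - F' t"]) (auto simp: abs_le_iff)
  qed
  moreover have "(\<lambda>t. G t + F t) 0 \<le> (\<lambda>t. G t + F t) s"
  proof (rule DERIV_nonneg_imp_nondecreasing[OF \<open>0 \<le> s\<close>])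
    fix t assume "0 \<le> t" "t \<le> s"
    then show "\<exists>y. ((\<lambda>t. G t + F t) has_real_derivative y) (at t) \<and> 0 \<le> y"
      using DERIV_add[OF G F] dominated[of t] by (intro exI[of _ "G' t + F' t"]) (auto simp: abs_le_iff)
  qed
  ultimately show ?thesis
    by simp
qed

lemma abs_le_of_linear_damping:
  fixes f g :: "real \<Rightarrow> real"
  assumes "0 < c" "0 \<le> t"
    and f: "\<And>s. 0 \<le> s \<Longrightarrow> s \<le> t \<Longrightarrow> (f has_real_derivative - c * f s + g s) (at s)"
    and g: "\<And>s. 0 \<le> s \<Longrightarrow> s \<le> t \<Longrightarrow> \<bar>g s\<bar> \<le> M"
  shows "\<bar>f t\<bar> \<le> \<bar>f 0\<bar> + M / c"
proof -
  have "0 \<le> M"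
    using g[of 0] \<open>0 \<le> t\<close> by linarith
  have "\<bar>exp (c * t) * f t - exp (c * 0) * f 0\<bar> \<le> M / c * exp (c * t) - M / c * exp (c * 0)"
  proof (rule DERIV_dominated_abs_diff_le[OF \<open>0 \<le> t\<close>])
    fix s assume s: "0 \<le> s" "s \<le> t"
    show "((\<lambda>s. exp (c * s) * f s) has_real_derivative exp (c * s) * g s) (at s)"
      using f[OF s] by (auto intro!: derivative_eq_intros simp: algebra_simps)
    show "((\<lambda>s. M / c * exp (c * s)) has_real_derivative M * exp (c * s)) (at s)"
      using \<open>0 < c\<close> by (auto intro!: derivative_eq_intros)
    show "\<bar>exp (c * s) * g s\<bar> \<le> M * exp (c * s)"
      using g[OF s] by (simp add: abs_mult)
  qed
  then have "exp (c * t) * \<bar>f t\<bar> \<le> \<bar>f 0\<bar> + M / c * (exp (c * t) - 1)"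
    by (simp add: abs_mult algebra_simps)
  also have "\<dots> \<le> exp (c * t) * (\<bar>f 0\<bar> + M / c)"
    using mult_right_mono[of 1 "exp (c * t)" "\<bar>f 0\<bar>"] \<open>0 < c\<close> \<open>0 \<le> t\<close> \<open>0 \<le> M\<close>
    by (simp add: algebra_simps add_increasing)
  finally show ?thesis
    by simp
qed

context
  fixes a \<mu> :: real and u v :: "real \<Rightarrow> real"
  assumes a_pos: "0 < a" and \<mu>_pos: "0 < \<mu>"
    and u_deriv: "\<And>t. (u has_real_derivative v t) (at t)"
    and v_deriv: "\<And>t. (v has_real_derivative (- a * u t - v t) / \<mu>) (at t)"
begin

lemma damped_oscillator_abs_le:
  assumes "0 \<le> t"
  shows "\<bar>u t\<bar> \<le> sqrt ((u 0)\<^sup>2 + \<mu> * (v 0)\<^sup>2 / a)"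
proof -
  have "(\<lambda>t. a * (u t)\<^sup>2 + \<mu> * (v t)\<^sup>2) t \<le> (\<lambda>t. a * (u t)\<^sup>2 + \<mu> * (v t)\<^sup>2) 0"
  proof (rule DERIV_nonpos_imp_nonincreasing[OF assms])
    fix s
    have "((\<lambda>t. a * (u t)\<^sup>2 + \<mu> * (v t)\<^sup>2) has_real_derivative
        a * (2 * u s * v s) + \<mu> * (2 * v s * ((- a * u s - v s) / \<mu>))) (at s)"
      by (auto intro!: derivative_eq_intros u_deriv v_deriv)
    moreover have "a * (2 * u s * v s) + \<mu> * (2 * v s * ((- a * u s - v s) / \<mu>)) = - 2 * (v s)\<^sup>2"
      using \<mu>_pos by (simp add: field_simps power2_eq_square)
    ultimately
    show "\<exists>y. ((\<lambda>t. a * (u t)\<^sup>2 + \<mu> * (v t)\<^sup>2) has_real_derivative y) (at s) \<and> y \<le> 0"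
      by auto
  qed
  then have "a * (u t)\<^sup>2 \<le> a * (u 0)\<^sup>2 + \<mu> * (v 0)\<^sup>2"
    using \<mu>_pos by (simp add: add_increasing2 order_trans[rotated])
  then have "(u t)\<^sup>2 \<le> (u 0)\<^sup>2 + \<mu> * (v 0)\<^sup>2 / a"
    using a_pos by (simp add: field_simps)
  then show ?thesis
    using real_sqrt_le_mono by fastforce
qed

lemma damped_oscillator_velocity_le:
  assumes "0 \<le> t"
  shows "\<mu> * \<bar>v t\<bar> \<le> \<mu> * \<bar>v 0\<bar> + \<mu> * a * sqrt ((u 0)\<^sup>2 + \<mu> * (v 0)\<^sup>2 / a)"
proof -
  have "\<bar>\<mu> * v t\<bar> \<le> \<bar>\<mu> * v 0\<bar> + a * sqrt ((u 0)\<^sup>2 + \<mu> * (v 0)\<^sup>2 / a) / (1 / \<mu>)"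
  proof (rule abs_le_of_linear_damping[OF _ assms])
    fix s assume "0 \<le> s" "s \<le> t"
    show "((\<lambda>s. \<mu> * v s) has_real_derivative - (1 / \<mu>) * (\<mu> * v s) + - a * u s) (at s)"
      using \<mu>_pos by (auto intro!: derivative_eq_intros v_deriv simp: field_simps)
    show "\<bar>- a * u s\<bar> \<le> a * sqrt ((u 0)\<^sup>2 + \<mu> * (v 0)\<^sup>2 / a)"
      using damped_oscillator_abs_le[OF \<open>0 \<le> s\<close>] a_pos by (simp add: abs_mult)
  qed (use \<mu>_pos in simp)
  then show ?thesis
    using \<mu>_pos by (simp add: abs_mult mult_ac)
qed

lemma damped_oscillator_heat_error:
  assumes "0 \<le> t"
  shows "\<bar>u t - exp (- a * t) * u 0\<bar> \<le> 3 * \<mu> * \<bar>v 0\<bar> + 2 * \<mu> * a * sqrt ((u 0)\<^sup>2 + \<mu> * (v 0)\<^sup>2 / a)"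
proof -
  define Q where "Q = \<mu> * \<bar>v 0\<bar> + \<mu> * a * sqrt ((u 0)\<^sup>2 + \<mu> * (v 0)\<^sup>2 / a)"
  (* z' = - a z + a \<mu> v: the heat-flow error of u, corrected by \<mu> v, is forced only by \<mu> v *)
  define z where "z s = \<mu> * v s + u s - exp (- a * s) * u 0" for s
  have "\<bar>z t\<bar> \<le> \<bar>z 0\<bar> + a * Q / a"
  proof (rule abs_le_of_linear_damping[OF a_pos assms])
    fix s assume "0 \<le> s" "s \<le> t"
    show "(z has_real_derivative - a * z s + a * (\<mu> * v s)) (at s)"
      unfolding z_def using \<mu>_pos
      by (auto intro!: derivative_eq_intros u_deriv v_deriv simp: field_simps)
    show "\<bar>a * (\<mu> * v s)\<bar> \<le> a * Q"
      using damped_oscillator_velocity_le[OF \<open>0 \<le> s\<close>] a_pos \<mu>_pos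
      unfolding Q_def by (simp add: abs_mult)
  qed
  then have "\<bar>z t\<bar> \<le> \<mu> * \<bar>v 0\<bar> + Q"
    unfolding z_def using a_pos \<mu>_pos by (simp add: abs_mult)
  moreover have "\<bar>u t - exp (- a * t) * u 0\<bar> \<le> \<bar>z t\<bar> + \<mu> * \<bar>v t\<bar>"
    using abs_triangle_ineq4[of "z t" "\<mu> * v t"] \<mu>_pos unfolding z_def by (simp add: abs_mult)
  ultimately show ?thesis
    using damped_oscillator_velocity_le[OF assms] unfolding Q_def by linarith
qed

end

lemma mode_exp_damped_oscillator:
  assumes "0 < \<alpha> k" "0 < \<mu>" "0 \<le> t"
  shows "\<bar>fst (mode_exp \<alpha> \<mu> k t z)\<bar> \<le> sqrt ((fst z)\<^sup>2 + \<mu> * (snd z)\<^sup>2 / \<alpha> k)"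
    and "\<bar>fst (mode_exp \<alpha> \<mu> k t z) - exp (- \<alpha> k * t) * fst z\<bar>
      \<le> 3 * \<mu> * \<bar>snd z\<bar> + 2 * \<mu> * \<alpha> k * sqrt ((fst z)\<^sup>2 + \<mu> * (snd z)\<^sup>2 / \<alpha> k)"
proof -
  define u where "u s = fst (mode_exp \<alpha> \<mu> k s z)" for s
  define v where "v s = snd (mode_exp \<alpha> \<mu> k s z)" for s
  have u_deriv: "(u has_real_derivative v s) (at s)"
    and v_deriv: "(v has_real_derivative (- \<alpha> k * u s - v s) / \<mu>) (at s)" for s
    unfolding u_def v_def using mode_exp_has_derivative[OF \<open>0 < \<mu>\<close>] by blast+
  have "u 0 = fst z" "v 0 = snd z"
    unfolding u_def v_def by (simp_all add: mode_exp_zero)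
  then show "\<bar>fst (mode_exp \<alpha> \<mu> k t z)\<bar> \<le> sqrt ((fst z)\<^sup>2 + \<mu> * (snd z)\<^sup>2 / \<alpha> k)"
    and "\<bar>fst (mode_exp \<alpha> \<mu> k t z) - exp (- \<alpha> k * t) * fst z\<bar>
      \<le> 3 * \<mu> * \<bar>snd z\<bar> + 2 * \<mu> * \<alpha> k * sqrt ((fst z)\<^sup>2 + \<mu> * (snd z)\<^sup>2 / \<alpha> k)"
    using damped_oscillator_abs_le[OF assms(1,2) u_deriv v_deriv assms(3)]
      damped_oscillator_heat_error[OF assms(1,2) u_deriv v_deriv assms(3)]
    unfolding u_def by simp_all
qed

lemma power2_sum_le: "(p + q)\<^sup>2 \<le> 2 * p\<^sup>2 + 2 * (q::'a::linordered_idom)\<^sup>2"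
  using sum_squares_ge_zero[of "p - q" 0] by (simp add: power2_eq_square algebra_simps)

lemma high_mode_error_sq_le:
  fixes w x y a \<mu> N \<beta> :: real
  assumes "0 < N" "N \<le> a" "0 \<le> \<mu>" "0 \<le> \<beta>"
    and w: "\<bar>w\<bar> \<le> sqrt (x\<^sup>2 + \<mu> * y\<^sup>2 / a) + \<bar>x\<bar>"
  shows "w\<^sup>2 \<le> (4 / N powr \<beta> + 2 / N) * (a powr \<beta> * x\<^sup>2 + \<mu> * y\<^sup>2)"
proof -
  have "0 < a"
    using assms by linarith
  have "w\<^sup>2 \<le> (sqrt (x\<^sup>2 + \<mu> * y\<^sup>2 / a) + \<bar>x\<bar>)\<^sup>2"
    using power_mono[OF w abs_ge_zero, of 2] by simp
  also have "\<dots> \<le> 4 * x\<^sup>2 + 2 * (\<mu> * y\<^sup>2 / a)"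
    using power2_sum_le[of "sqrt (x\<^sup>2 + \<mu> * y\<^sup>2 / a)" "\<bar>x\<bar>"] \<open>0 < a\<close> \<open>0 \<le> \<mu>\<close> by simp
  also have "\<dots> \<le> 4 / N powr \<beta> * (a powr \<beta> * x\<^sup>2) + 2 / N * (\<mu> * y\<^sup>2)"
  proof (rule add_mono)
    have "N powr \<beta> * x\<^sup>2 \<le> a powr \<beta> * x\<^sup>2"
      using assms by (intro mult_right_mono powr_mono2) auto
    then show "4 * x\<^sup>2 \<le> 4 / N powr \<beta> * (a powr \<beta> * x\<^sup>2)"
      using \<open>0 < N\<close> by (simp add: field_simps)
    show "2 * (\<mu> * y\<^sup>2 / a) \<le> 2 / N * (\<mu> * y\<^sup>2)"
      using assms by (simp add: divide_left_mono)
  qed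
  also have "\<dots> \<le> (4 / N powr \<beta> + 2 / N) * (a powr \<beta> * x\<^sup>2 + \<mu> * y\<^sup>2)"
    using \<open>0 < N\<close> \<open>0 \<le> \<mu>\<close> by (simp add: algebra_simps)
  finally show ?thesis .
qed

lemma low_mode_error_sq_le:
  fixes w x y a \<mu> N \<alpha>0 \<beta> :: real
  assumes "0 < \<alpha>0" "\<alpha>0 \<le> a" "a \<le> N" "0 < \<mu>" "0 \<le> \<beta>"
    and w: "\<bar>w\<bar> \<le> 3 * \<mu> * \<bar>y\<bar> + 2 * \<mu> * a * sqrt (x\<^sup>2 + \<mu> * y\<^sup>2 / a)"
  shows "w\<^sup>2 \<le> \<mu> * (18 + 8 * \<mu> * (N + N\<^sup>2 / \<alpha>0 powr \<beta>)) * (a powr \<beta> * x\<^sup>2 + \<mu> * y\<^sup>2)"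
proof -
  let ?X = "a powr \<beta> * x\<^sup>2" and ?Y = "\<mu> * y\<^sup>2" and ?c = "N\<^sup>2 / \<alpha>0 powr \<beta>"
  have "0 < a" "0 \<le> ?X" "0 \<le> ?Y"
    using assms by auto
  have "w\<^sup>2 \<le> (3 * \<mu> * \<bar>y\<bar> + 2 * \<mu> * a * sqrt (x\<^sup>2 + \<mu> * y\<^sup>2 / a))\<^sup>2"
    using power_mono[OF w abs_ge_zero, of 2] by simp
  also have "\<dots> \<le> 2 * (3 * \<mu> * \<bar>y\<bar>)\<^sup>2 + 2 * (2 * \<mu> * a * sqrt (x\<^sup>2 + \<mu> * y\<^sup>2 / a))\<^sup>2"
    by (rule power2_sum_le)
  also have "\<dots> = 18 * \<mu> * ?Y + 8 * \<mu>\<^sup>2 * (a\<^sup>2 * x\<^sup>2) + 8 * \<mu>\<^sup>2 * (a * ?Y)"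
  proof -
    have "(sqrt (x\<^sup>2 + \<mu> * y\<^sup>2 / a))\<^sup>2 = x\<^sup>2 + \<mu> * y\<^sup>2 / a"
      using \<open>0 < a\<close> \<open>0 < \<mu>\<close> by simp
    then show ?thesis
      using \<open>0 < a\<close> unfolding power_mult_distrib power2_abs by (simp add: field_simps power2_eq_square)
  qed
  also have "\<dots> \<le> 18 * \<mu> * (?X + ?Y) + 8 * \<mu>\<^sup>2 * (?c * (?X + ?Y)) + 8 * \<mu>\<^sup>2 * (N * (?X + ?Y))"
  proof -
    have "a\<^sup>2 * (\<alpha>0 powr \<beta> * x\<^sup>2) \<le> N\<^sup>2 * ?X"
      using assms by (intro mult_mono power_mono mult_right_mono powr_mono2) auto
    then have "a\<^sup>2 * x\<^sup>2 \<le> ?c * ?X"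
      using \<open>0 < \<alpha>0\<close> by (simp add: field_simps)
    also have "\<dots> \<le> ?c * (?X + ?Y)"
      using \<open>0 \<le> ?Y\<close> by (intro mult_left_mono) auto
    finally have "a\<^sup>2 * x\<^sup>2 \<le> ?c * (?X + ?Y)" .
    moreover have "a * ?Y \<le> N * (?X + ?Y)"
      using assms \<open>0 \<le> ?X\<close> \<open>0 \<le> ?Y\<close> by (intro mult_mono) auto
    ultimately show ?thesis
      using \<open>0 < \<mu>\<close> \<open>0 \<le> ?X\<close> by (intro add_mono mult_left_mono) auto
  qed
  also have "\<dots> = \<mu> * (18 + 8 * \<mu> * (N + ?c)) * (?X + ?Y)"
    by (simp add: ring_distribs power2_eq_square mult_ac add_divide_distrib)
  finally show ?thesis .
qed

(* The first two terms bound the modes with \<alpha> k > N, the multiple of \<mu> those with \<alpha> k \<le> N. *)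
definition mode_error_bound :: "real \<Rightarrow> real \<Rightarrow> real \<Rightarrow> real \<Rightarrow> real" where
  "mode_error_bound \<alpha>0 \<beta> N \<mu> = 4 / N powr \<beta> + 2 / N + \<mu> * (18 + 8 * \<mu> * (N + N\<^sup>2 / \<alpha>0 powr \<beta>))"

lemma mode_error_bound_nonneg:
  "0 < \<alpha>0 \<Longrightarrow> 0 < N \<Longrightarrow> 0 \<le> \<mu> \<Longrightarrow> 0 \<le> mode_error_bound \<alpha>0 \<beta> N \<mu>"
  by (simp add: mode_error_bound_def)

lemma mode_error_bound_small:
  assumes "0 < \<beta>" "0 < \<eta>"
  shows "\<exists>N>0. \<exists>\<delta>>0. \<forall>\<mu>. 0 < \<mu> \<and> \<mu> < \<delta> \<longrightarrow> mode_error_bound \<alpha>0 \<beta> N \<mu> < \<eta>"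
proof -
  have high_lim: "((\<lambda>N. 4 / N powr \<beta> + 2 / N) \<longlongrightarrow> 0) at_top"
    using \<open>0 < \<beta>\<close> by (auto intro!: tendsto_add_zero tendsto_divide_0 filterlim_ident
        filterlim_at_top_imp_at_infinity real_powr_at_top)
  have "\<forall>\<^sub>F N in at_top. 0 < N \<and> 4 / N powr \<beta> + 2 / N < \<eta> / 2"
    by (intro eventually_conj eventually_gt_at_top order_tendstoD(2)[OF high_lim]) (simp add: \<open>0 < \<eta>\<close>)
  then obtain N where "0 < N" and high: "4 / N powr \<beta> + 2 / N < \<eta> / 2"
    by (auto simp: eventually_at_top_linorder)
  define K where "K = 8 * (N + N\<^sup>2 / \<alpha>0 powr \<beta>)"
  have low_lim: "((\<lambda>\<mu>. \<mu> * (18 + \<mu> * K)) \<longlongrightarrow> 0) (at_right 0)"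
    by (auto intro!: tendsto_eq_intros)
  obtain \<delta> where "0 < \<delta>" and low: "\<And>\<mu>. 0 < \<mu> \<Longrightarrow> \<mu> < \<delta> \<Longrightarrow> \<mu> * (18 + \<mu> * K) < \<eta> / 2"
    using order_tendstoD(2)[OF low_lim, of "\<eta> / 2"] \<open>0 < \<eta>\<close> by (auto simp: eventually_at_right_field)
  have "mode_error_bound \<alpha>0 \<beta> N \<mu> = 4 / N powr \<beta> + 2 / N + \<mu> * (18 + \<mu> * K)" for \<mu>
    unfolding mode_error_bound_def K_def by (simp add: algebra_simps)
  then have "mode_error_bound \<alpha>0 \<beta> N \<mu> < \<eta>" if "0 < \<mu>" "\<mu> < \<delta>" for \<mu>
    using high low[OF that] by simp
  with \<open>0 < N\<close> \<open>0 < \<delta>\<close> show ?thesis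
    by blast
qed

lemma dirichlet_spectrum_first_pos: "dirichlet_spectrum \<alpha> \<Longrightarrow> 0 < \<alpha> 0"
  by (simp add: dirichlet_spectrum_def)

lemma dirichlet_spectrum_ge_first: "dirichlet_spectrum \<alpha> \<Longrightarrow> \<alpha> 0 \<le> \<alpha> k"
  by (simp add: dirichlet_spectrum_def mono_def)

lemma dirichlet_spectrum_pos: "dirichlet_spectrum \<alpha> \<Longrightarrow> 0 < \<alpha> k"
  using dirichlet_spectrum_first_pos dirichlet_spectrum_ge_first less_le_trans by blast

lemma mode_error_sq_le:
  assumes \<alpha>: "dirichlet_spectrum \<alpha>" and "0 < \<mu>" "0 < N" "0 \<le> \<beta>" "0 \<le> t"
  shows "(fst (damped_group \<alpha> \<mu> t (x, y)) k - heat_sg \<alpha> t x k)\<^sup>2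
    \<le> mode_error_bound (\<alpha> 0) \<beta> N \<mu> * (\<alpha> k powr \<beta> * (x k)\<^sup>2 + \<mu> * (y k)\<^sup>2)"
    (is "?w\<^sup>2 \<le> _ * ?E")
proof -
  let ?high = "4 / N powr \<beta> + 2 / N" and ?low = "\<mu> * (18 + 8 * \<mu> * (N + N\<^sup>2 / \<alpha> 0 powr \<beta>))"
  have "0 < \<alpha> 0" "\<alpha> 0 \<le> \<alpha> k" "0 < \<alpha> k"
    using \<alpha> dirichlet_spectrum_first_pos dirichlet_spectrum_ge_first dirichlet_spectrum_pos by auto
  have w: "?w = fst (mode_exp \<alpha> \<mu> k t (x k, y k)) - exp (- \<alpha> k * t) * x k"
    unfolding damped_group_def heat_sg_def by simp
  have "\<bar>exp (- \<alpha> k * t) * x k\<bar> \<le> \<bar>x k\<bar>"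
    using \<open>0 < \<alpha> k\<close> \<open>0 \<le> t\<close> by (simp add: abs_mult mult_left_le_one_le)
  then have bounded: "\<bar>?w\<bar> \<le> sqrt ((x k)\<^sup>2 + \<mu> * (y k)\<^sup>2 / \<alpha> k) + \<bar>x k\<bar>"
    using mode_exp_damped_oscillator(1)[of \<alpha> k \<mu> t "(x k, y k)"] \<open>0 < \<alpha> k\<close> \<open>0 < \<mu>\<close> \<open>0 \<le> t\<close>
      abs_triangle_ineq4[of "fst (mode_exp \<alpha> \<mu> k t (x k, y k))" "exp (- \<alpha> k * t) * x k"]
    unfolding w by simp
  have heat_error: "\<bar>?w\<bar> \<le> 3 * \<mu> * \<bar>y k\<bar> + 2 * \<mu> * \<alpha> k * sqrt ((x k)\<^sup>2 + \<mu> * (y k)\<^sup>2 / \<alpha> k)"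
    using mode_exp_damped_oscillator(2)[of \<alpha> k \<mu> t "(x k, y k)"] \<open>0 < \<alpha> k\<close> \<open>0 < \<mu>\<close> \<open>0 \<le> t\<close>
    unfolding w by simp
  have "?w\<^sup>2 \<le> ?high * ?E \<or> ?w\<^sup>2 \<le> ?low * ?E"
    using high_mode_error_sq_le[OF \<open>0 < N\<close> _ _ \<open>0 \<le> \<beta>\<close> bounded]
      low_mode_error_sq_le[OF \<open>0 < \<alpha> 0\<close> \<open>\<alpha> 0 \<le> \<alpha> k\<close> _ \<open>0 < \<mu>\<close> \<open>0 \<le> \<beta>\<close> heat_error] \<open>0 < \<mu>\<close>
    by (cases "\<alpha> k \<le> N") (simp_all add: mult.assoc)
  moreover have "0 \<le> ?high * ?E" "0 \<le> ?low * ?E"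
    using assms by simp_all
  ultimately show ?thesis
    unfolding mode_error_bound_def distrib_right by linarith
qed

(* The hypothesis is needed since 0 powr 0 = 0. *)
lemma inH_0_iff_summable_square:
  assumes "\<And>k. \<alpha> k \<noteq> 0"
  shows "inH \<alpha> 0 y \<longleftrightarrow> summable (\<lambda>k. (y k)\<^sup>2)"
  using assms by (simp add: inH_def)

lemma L2norm_le_of_square_le_energy:
  assumes pos: "\<And>k. 0 < \<alpha> k" and x: "inH \<alpha> \<beta> x" and y: "inH \<alpha> 0 y"
    and "0 \<le> \<mu>" "0 \<le> C"
    and R: "Hnorm \<alpha> \<beta> x + sqrt \<mu> * L2norm y \<le> R"
    and w: "\<And>k. (w k)\<^sup>2 \<le> C * (\<alpha> k powr \<beta> * (x k)\<^sup>2 + \<mu> * (y k)\<^sup>2)"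
  shows "L2norm w \<le> sqrt C * R"
proof -
  define X where "X = (\<Sum>k. \<alpha> k powr \<beta> * (x k)\<^sup>2)"
  define Y where "Y = (\<Sum>k. (y k)\<^sup>2)"
  have sx: "summable (\<lambda>k. \<alpha> k powr \<beta> * (x k)\<^sup>2)"
    using x by (simp add: inH_def)
  have sy: "summable (\<lambda>k. (y k)\<^sup>2)"
    using y pos inH_0_iff_summable_square by (metis less_irrefl)
  have "0 \<le> X" "0 \<le> Y"
    unfolding X_def Y_def using sx sy by (auto intro: suminf_nonneg)
  have R': "sqrt X + sqrt \<mu> * sqrt Y \<le> R"
    using R unfolding Hnorm_def L2norm_def X_def Y_def .
  have "0 \<le> sqrt X + sqrt \<mu> * sqrt Y"
    using \<open>0 \<le> X\<close> \<open>0 \<le> Y\<close> \<open>0 \<le> \<mu>\<close> by simp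
  have energy: "(\<lambda>k. C * (\<alpha> k powr \<beta> * (x k)\<^sup>2 + \<mu> * (y k)\<^sup>2)) sums (C * (X + \<mu> * Y))"
    unfolding X_def Y_def by (intro sums_mult sums_add summable_sums summable_mult sx sy)
  have "summable (\<lambda>k. (w k)\<^sup>2)"
    by (rule summable_comparison_test'[OF sums_summable[OF energy], of 0]) (simp add: w)
  then have "(\<Sum>k. (w k)\<^sup>2) \<le> C * (X + \<mu> * Y)"
    using suminf_le[OF w _ sums_summable[OF energy]] sums_unique[OF energy] by simp
  also have "\<dots> \<le> C * (sqrt X + sqrt \<mu> * sqrt Y)\<^sup>2"
    using \<open>0 \<le> X\<close> \<open>0 \<le> Y\<close> \<open>0 \<le> \<mu>\<close> \<open>0 \<le> C\<close>
    by (intro mult_left_mono) (simp_all add: power2_sum power_mult_distrib)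
  also have "\<dots> \<le> C * R\<^sup>2"
    using R' \<open>0 \<le> sqrt X + sqrt \<mu> * sqrt Y\<close> \<open>0 \<le> C\<close> by (intro mult_left_mono power_mono)
  finally have "L2norm w \<le> sqrt (C * R\<^sup>2)"
    unfolding L2norm_def by (rule real_sqrt_le_mono)
  then show ?thesis
    using R' \<open>0 \<le> sqrt X + sqrt \<mu> * sqrt Y\<close> by (simp add: real_sqrt_mult)
qed

lemma L2norm_damped_group_error_le:
  assumes "dirichlet_spectrum \<alpha>" "0 < \<mu>" "0 < N" "0 \<le> \<beta>" "0 \<le> t"
    and "inH \<alpha> \<beta> x" "inH \<alpha> 0 y" "Hnorm \<alpha> \<beta> x + sqrt \<mu> * L2norm y \<le> R"
  shows "L2norm (\<lambda>k. fst (damped_group \<alpha> \<mu> t (x, y)) k - heat_sg \<alpha> t x k)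
    \<le> sqrt (mode_error_bound (\<alpha> 0) \<beta> N \<mu>) * R"
  using assms dirichlet_spectrum_pos dirichlet_spectrum_first_pos mode_error_bound_nonneg
  by (intro L2norm_le_of_square_le_energy) (auto intro!: mode_error_sq_le)

theorem lemma3p2:
  fixes \<alpha> :: "nat \<Rightarrow> real" and T \<beta> :: real
  assumes "dirichlet_spectrum \<alpha>" and "T > 0" and "\<beta> > 0"
  shows "\<forall>R>0. \<forall>\<epsilon>>0. \<exists>\<delta>>0. \<forall>\<mu>. 0 < \<mu> \<and> \<mu> < \<delta> \<longrightarrow>
           (\<forall>x y. inH \<alpha> \<beta> x \<and> inH \<alpha> 0 y \<and> Hnorm \<alpha> \<beta> x + sqrt \<mu> * L2norm y \<le> R \<longrightarrow>
              (\<forall>t\<in>{0..T}. L2norm (\<lambda>k. fst (damped_group \<alpha> \<mu> t (x, y)) k - heat_sg \<alpha> t x k) \<le> \<epsilon>))"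
proof (intro allI impI)
  fix R \<epsilon> :: real
  assume "0 < R" "0 < \<epsilon>"
  then have "0 < (\<epsilon> / R)\<^sup>2"
    by simp
  then obtain N \<delta> where "0 < N" "0 < \<delta>"
    and small: "\<And>\<mu>. 0 < \<mu> \<Longrightarrow> \<mu> < \<delta> \<Longrightarrow> mode_error_bound (\<alpha> 0) \<beta> N \<mu> < (\<epsilon> / R)\<^sup>2"
    using mode_error_bound_small[OF \<open>0 < \<beta>\<close>, of "(\<epsilon> / R)\<^sup>2" "\<alpha> 0"] by blast
  have "L2norm (\<lambda>k. fst (damped_group \<alpha> \<mu> t (x, y)) k - heat_sg \<alpha> t x k) \<le> \<epsilon>"
    if "0 < \<mu>" "\<mu> < \<delta>" "inH \<alpha> \<beta> x" "inH \<alpha> 0 y" "Hnorm \<alpha> \<beta> x + sqrt \<mu> * L2norm y \<le> R" "0 \<le> t"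
    for \<mu> x y t
  proof -
    have "L2norm (\<lambda>k. fst (damped_group \<alpha> \<mu> t (x, y)) k - heat_sg \<alpha> t x k)
        \<le> sqrt (mode_error_bound (\<alpha> 0) \<beta> N \<mu>) * R"
      using assms that \<open>0 < N\<close> by (intro L2norm_damped_group_error_le) auto
    also have "\<dots> \<le> sqrt ((\<epsilon> / R)\<^sup>2) * R"
      using small[OF that(1,2)] \<open>0 < R\<close> by (intro mult_right_mono real_sqrt_le_mono) auto
    also have "\<dots> = \<epsilon>"
      using \<open>0 < R\<close> \<open>0 < \<epsilon>\<close> by simp
    finally show ?thesis .
  qed
  with \<open>0 < \<delta>\<close> show "\<exists>\<delta>>0. \<forall>\<mu>. 0 < \<mu> \<and> \<mu> < \<delta> \<longrightarrow>
           (\<forall>x y. inH \<alpha> \<beta> x \<and> inH \<alpha> 0 y \<and> Hnorm \<alpha> \<beta> x + sqrt \<mu> * L2norm y \<le> R \<longrightarrow>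
              (\<forall>t\<in>{0..T}. L2norm (\<lambda>k. fst (damped_group \<alpha> \<mu> t (x, y)) k - heat_sg \<alpha> t x k) \<le> \<epsilon>))"
    by auto
qed

end
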